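(* Consider the (unscaled) HILT model on $N$ nodes with weight $\gamma=\Gamma/(N-1)$, $\Gamma\in(0,1]$, and i.i.d. thresholds $\Theta_1,\dots,\Theta_N$ with continuous c.d.f. $F$ satisfying $F(0)=0$. Let $\mathcal A(0)$ be a fixed nonempty initial set of destinations, $\mathcal D(0)=\mathcal A(0)$, $\mathcal B(0)=\emptyset$, and for $k\ge0$ let $\mathcal A(k+1)=\mathcal A(k)\cup\{i\notin\mathcal A(k):\gamma|\mathcal A(k)|\ge\Theta_i\}$, $\mathcal D(k+1)=\mathcal A(k+1)\setminus\mathcal A(k)$, $\mathcal B(k+1)=\mathcal A(k)$. Let $B(k)=|\mathcal B(k)|$, $D(k)=|\mathcal D(k)|$. Then $(B(k),D(k))_{k\ge0}$ is a discrete-time Markov chain: $B(k+1)=B(k)+D(k)$, and for every $k\ge0$ and every history with positive probability ending in $(B(k),D(k))=(j,m)$ with $F(\gamma j)<1$, $$\mathbb{P}\big(D(k+1)=\ell\,\big|\,(B(0),D(0)),\dots,(B(k),D(k))\big)=\binom{N-j-m}{\ell}p^\ell(1-p)^{N-j-m-\ell},\quad p=\frac{F(\gamma(j+m))-F(\gamma j)}{1-F(\gamma j)}.$$ *)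

theory Defs
  imports "HOL-Probability.Probability"
begin

definition hilt_step :: "nat \<Rightarrow> real \<Rightarrow> (nat \<Rightarrow> real) \<Rightarrow> nat set \<Rightarrow> nat set" where
  "hilt_step N \<gamma> \<theta> A = A \<union> {i \<in> {..<N}. i \<notin> A \<and> \<gamma> * real (card A) \<ge> \<theta> i}"

fun hilt_A :: "nat \<Rightarrow> real \<Rightarrow> (nat \<Rightarrow> real) \<Rightarrow> nat set \<Rightarrow> nat \<Rightarrow> nat set" where
  "hilt_A N \<gamma> \<theta> A0 0 = A0"
| "hilt_A N \<gamma> \<theta> A0 (Suc k) = hilt_step N \<gamma> \<theta> (hilt_A N \<gamma> \<theta> A0 k)"

fun hilt_Bset :: "nat \<Rightarrow> real \<Rightarrow> (nat \<Rightarrow> real) \<Rightarrow> nat set \<Rightarrow> nat \<Rightarrow> nat set" where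
  "hilt_Bset N \<gamma> \<theta> A0 0 = {}"
| "hilt_Bset N \<gamma> \<theta> A0 (Suc k) = hilt_A N \<gamma> \<theta> A0 k"

fun hilt_Dset :: "nat \<Rightarrow> real \<Rightarrow> (nat \<Rightarrow> real) \<Rightarrow> nat set \<Rightarrow> nat \<Rightarrow> nat set" where
  "hilt_Dset N \<gamma> \<theta> A0 0 = A0"
| "hilt_Dset N \<gamma> \<theta> A0 (Suc k) = hilt_A N \<gamma> \<theta> A0 (Suc k) - hilt_A N \<gamma> \<theta> A0 k"

definition hilt_B :: "nat \<Rightarrow> real \<Rightarrow> (nat \<Rightarrow> real) \<Rightarrow> nat set \<Rightarrow> nat \<Rightarrow> nat" where
  "hilt_B N \<gamma> \<theta> A0 k = card (hilt_Bset N \<gamma> \<theta> A0 k)"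

definition hilt_D :: "nat \<Rightarrow> real \<Rightarrow> (nat \<Rightarrow> real) \<Rightarrow> nat set \<Rightarrow> nat \<Rightarrow> nat" where
  "hilt_D N \<gamma> \<theta> A0 k = card (hilt_Dset N \<gamma> \<theta> A0 k)"

end

theory Submission
  imports Defs
begin

(* For a fixed threshold vector the cascade is deterministic, and B(k+1) = B(k) + D(k) is a
   counting identity.  For the transition law we work with trajectories: families X 0, ..., X k
   of activated sets.  The cascade follows X iff every node i has its threshold in an
   explicit Borel set "consistent gamma X k i"; by independence the probability of a trajectory
   is the product of these threshold probabilities.  For a node still inactive at step k this
   set is, up to the null event Theta_i <= 0 (as F 0 = 0), the half-line (gamma B(k), oo).
   Hence every trajectory compatible with a history ending in (j, m) has probability
   w(X) (1 - F(gamma j))^(N-j-m), and every extension of it by a set of l new nodes has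
   probability w(X) (F(gamma (j+m)) - F(gamma j))^l (1 - F(gamma (j+m)))^(N-j-m-l), with the same
   weight w(X) of the active nodes.  Summing over the disjoint trajectory events and dividing,
   the weights cancel and the binomial law remains. *)

lemma hilt_A_subset: "A0 \<subseteq> {..<N} \<Longrightarrow> hilt_A N \<gamma> \<theta> A0 k \<subseteq> {..<N}"
  by (induction k) (auto simp: hilt_step_def)

lemma hilt_A_Suc_mono: "hilt_A N \<gamma> \<theta> A0 k \<subseteq> hilt_A N \<gamma> \<theta> A0 (Suc k)"
  by (auto simp: hilt_step_def)

lemma hilt_A_finite: "finite A0 \<Longrightarrow> finite (hilt_A N \<gamma> \<theta> A0 k)"
  by (induction k) (auto simp: hilt_step_def)

lemma hilt_B_Suc:
  assumes "finite A0"
  shows "hilt_B N \<gamma> \<theta> A0 (Suc k) = hilt_B N \<gamma> \<theta> A0 k + hilt_D N \<gamma> \<theta> A0 k"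
proof (cases k)
  case 0
  then show ?thesis by (simp add: hilt_B_def hilt_D_def)
next
  case (Suc k')
  let ?A = "hilt_A N \<gamma> \<theta> A0"
  have "card (?A (Suc k')) = card (?A k') + card (?A (Suc k') - ?A k')"
    using hilt_A_finite[OF assms] hilt_A_Suc_mono
    by (metis card_Diff_subset card_mono finite_subset le_add_diff_inverse)
  then show ?thesis
    using Suc by (simp add: hilt_B_def hilt_D_def del: hilt_A.simps)
qed

definition consistent :: "real \<Rightarrow> (nat \<Rightarrow> nat set) \<Rightarrow> nat \<Rightarrow> nat \<Rightarrow> real set" where
  "consistent \<gamma> X k i =
     {x. \<forall>r<k. i \<notin> X r \<longrightarrow> (x \<le> \<gamma> * real (card (X r)) \<longleftrightarrow> i \<in> X (Suc r))}"

lemma consistent_Suc: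
  "consistent \<gamma> X (Suc k) i =
     consistent \<gamma> X k i \<inter> {x. i \<notin> X k \<longrightarrow> (x \<le> \<gamma> * real (card (X k)) \<longleftrightarrow> i \<in> X (Suc k))}"
  by (auto simp: consistent_def less_Suc_eq)

lemma consistent_cong: "\<forall>r\<le>k. X r = Y r \<Longrightarrow> consistent \<gamma> X k i = consistent \<gamma> Y k i"
  by (auto simp: consistent_def)

lemma consistent_borel: "consistent \<gamma> X k i \<in> sets borel"
proof (induction k)
  case 0
  then show ?case by (simp add: consistent_def)
next
  case (Suc k)
  have "{x::real. i \<notin> X k \<longrightarrow> (x \<le> \<gamma> * real (card (X k)) \<longleftrightarrow> i \<in> X (Suc k))} \<in> sets borel"
    by measurable
  then show ?case using Suc by (simp add: consistent_Suc)
qed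

lemma hilt_step_eq_iff:
  assumes "Y \<subseteq> Z" "Z \<subseteq> {..<N}"
  shows "hilt_step N \<gamma> \<theta> Y = Z \<longleftrightarrow>
         (\<forall>i<N. i \<notin> Y \<longrightarrow> (\<theta> i \<le> \<gamma> * real (card Y) \<longleftrightarrow> i \<in> Z))"
  using assms unfolding hilt_step_def by (auto; blast)

text \<open>The cascade follows a trajectory exactly if every node's threshold is consistent with it;
  this decouples the trajectory event into one condition per node.\<close>
lemma hilt_A_eq_trajectory_iff:
  assumes "X 0 = A0" "\<forall>r<k. X r \<subseteq> X (Suc r)" "\<forall>r\<le>k. X r \<subseteq> {..<N}"
  shows "(\<forall>r\<le>k. hilt_A N \<gamma> \<theta> A0 r = X r) \<longleftrightarrow> (\<forall>i<N. \<theta> i \<in> consistent \<gamma> X k i)"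
  using assms
proof (induction k)
  case 0
  then show ?case by (simp add: consistent_def)
next
  case (Suc k)
  have "(\<forall>r\<le>Suc k. hilt_A N \<gamma> \<theta> A0 r = X r) \<longleftrightarrow>
        (\<forall>r\<le>k. hilt_A N \<gamma> \<theta> A0 r = X r) \<and> hilt_step N \<gamma> \<theta> (X k) = X (Suc k)"
    by (metis hilt_A.simps(2) le_Suc_eq order_refl)
  also have "\<dots> \<longleftrightarrow> (\<forall>i<N. \<theta> i \<in> consistent \<gamma> X k i) \<and>
      (\<forall>i<N. i \<notin> X k \<longrightarrow> (\<theta> i \<le> \<gamma> * real (card (X k)) \<longleftrightarrow> i \<in> X (Suc k)))"
    using Suc hilt_step_eq_iff[of "X k" "X (Suc k)" N \<gamma> \<theta>] by auto
  also have "\<dots> \<longleftrightarrow> (\<forall>i<N. \<theta> i \<in> consistent \<gamma> X (Suc k) i)"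
    by (auto simp: consistent_Suc)
  finally show ?case .
qed

lemma chain_subset: "\<forall>r<k. X r \<subseteq> X (Suc r) \<Longrightarrow> r \<le> k \<Longrightarrow> X r \<subseteq> X k"
  by (induction k) (auto simp: le_Suc_eq)

definition traj_B :: "(nat \<Rightarrow> nat set) \<Rightarrow> nat \<Rightarrow> nat" where
  "traj_B X r = (if r = 0 then 0 else card (X (r - 1)))"

definition traj_D :: "(nat \<Rightarrow> nat set) \<Rightarrow> nat \<Rightarrow> nat" where
  "traj_D X r = (if r = 0 then card (X 0) else card (X r - X (r - 1)))"

lemma hilt_BD_eq_traj:
  assumes "\<forall>r\<le>k. hilt_A N \<gamma> \<theta> A0 r = X r" "r \<le> k"
  shows "hilt_B N \<gamma> \<theta> A0 r = traj_B X r \<and> hilt_D N \<gamma> \<theta> A0 r = traj_D X r"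
proof (cases r)
  case 0
  then show ?thesis using assms by (auto simp: hilt_B_def hilt_D_def traj_B_def traj_D_def)
next
  case (Suc r')
  then have "hilt_A N \<gamma> \<theta> A0 r' = X r'" "hilt_A N \<gamma> \<theta> A0 (Suc r') = X (Suc r')"
    using assms by (simp_all del: hilt_A.simps)
  then show ?thesis
    using Suc by (simp add: hilt_B_def hilt_D_def traj_B_def traj_D_def del: hilt_A.simps)
qed

lemma card_traj_last:
  assumes "\<forall>r<k. X r \<subseteq> X (Suc r)" "finite (X k)"
  shows "card (X k) = traj_B X k + traj_D X k"
proof (cases k)
  case 0
  then show ?thesis by (simp add: traj_B_def traj_D_def)
next
  case (Suc k')
  then have "X k' \<subseteq> X k" using assms(1) by auto
  then show ?thesis
    using Suc assms(2) by (simp add: traj_B_def traj_D_def card_Diff_subset card_mono finite_subset)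
qed

text \<open>For a node still inactive at step \<open>k\<close>, the consistent positive thresholds are those above
  \<open>\<gamma> B(k)\<close>: the strongest of the constraints is the one from step \<open>k - 1\<close>.\<close>
lemma consistent_inactive:
  assumes incr: "\<forall>r<k. X r \<subseteq> X (Suc r)" and "finite (X k)" "i \<notin> X k" "\<gamma> \<ge> 0"
  shows "consistent \<gamma> X k i \<inter> {0<..} = {\<gamma> * real (traj_B X k)<..}"
proof -
  have inactive: "i \<notin> X r" "i \<notin> X (Suc r)" if "r < k" for r
    using chain_subset[OF incr] that \<open>i \<notin> X k\<close> by (meson Suc_leI less_imp_le subsetD)+
  have below: "\<gamma> * real (card (X r)) \<le> \<gamma> * real (traj_B X k)" if "r < k" for r
  proof -
    have "X r \<subseteq> X (k - 1)"
      using chain_subset[of "k - 1" X r] incr that by auto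
    moreover have "finite (X (k - 1))"
      using chain_subset[OF incr, of "k - 1"] \<open>finite (X k)\<close> finite_subset by auto
    ultimately show ?thesis
      using that \<open>\<gamma> \<ge> 0\<close> by (simp add: traj_B_def card_mono mult_left_mono)
  qed
  have "consistent \<gamma> X k i = {x. \<forall>r<k. \<gamma> * real (card (X r)) < x}"
    using inactive by (auto simp: consistent_def not_le)
  also have "\<dots> \<inter> {0<..} = {\<gamma> * real (traj_B X k)<..}"
  proof (cases k)
    case 0
    then show ?thesis by (simp add: traj_B_def)
  next
    case (Suc k')
    then have "(\<forall>r<k. \<gamma> * real (card (X r)) < x) \<longleftrightarrow> \<gamma> * real (traj_B X k) < x" for x
      using below by (auto simp: traj_B_def intro: order_le_less_trans)
    moreover have "0 \<le> \<gamma> * real (traj_B X k)"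
      using \<open>\<gamma> \<ge> 0\<close> by simp
    ultimately show ?thesis by auto
  qed
  finally show ?thesis .
qed

lemma consistent_extend:
  "consistent \<gamma> (X(Suc k := S)) (Suc k) i =
     consistent \<gamma> X k i \<inter> {x. i \<notin> X k \<longrightarrow> (x \<le> \<gamma> * real (card (X k)) \<longleftrightarrow> i \<in> S)}"
proof -
  have "consistent \<gamma> (X(Suc k := S)) k i = consistent \<gamma> X k i"
    by (rule consistent_cong) auto
  then show ?thesis by (simp add: consistent_Suc)
qed

context prob_space
begin

lemma cdf_greater:
  fixes X :: "'a \<Rightarrow> real"
  assumes "X \<in> borel_measurable M" "\<And>x. prob {\<omega> \<in> space M. X \<omega> \<le> x} = F x"
  shows "prob (X -` {c<..} \<inter> space M) = 1 - F c"
proof -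
  have "X -` {c<..} \<inter> space M = space M - {\<omega> \<in> space M. X \<omega> \<le> c}"
    by (auto simp: not_le)
  moreover have "{\<omega> \<in> space M. X \<omega> \<le> c} \<in> events"
    using assms(1) by measurable
  ultimately show ?thesis using prob_compl assms(2) by simp
qed

lemma cdf_between:
  fixes X :: "'a \<Rightarrow> real"
  assumes "X \<in> borel_measurable M" "\<And>x. prob {\<omega> \<in> space M. X \<omega> \<le> x} = F x" "c \<le> d"
  shows "prob (X -` {c<..d} \<inter> space M) = F d - F c"
proof -
  have "X -` {c<..d} \<inter> space M = {\<omega> \<in> space M. X \<omega> \<le> d} - {\<omega> \<in> space M. X \<omega> \<le> c}"
    by auto
  moreover have "{\<omega> \<in> space M. X \<omega> \<le> x} \<in> events" for x
    using assms(1) by measurable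
  moreover have "{\<omega> \<in> space M. X \<omega> \<le> c} \<subseteq> {\<omega> \<in> space M. X \<omega> \<le> d}"
    using \<open>c \<le> d\<close> by auto
  ultimately show ?thesis using finite_measure_Diff assms(2) by simp
qed

lemma cdf_positive:
  fixes X :: "'a \<Rightarrow> real"
  assumes "X \<in> borel_measurable M" "prob {\<omega> \<in> space M. X \<omega> \<le> 0} = 0" "S \<in> sets borel"
  shows "prob (X -` S \<inter> space M) = prob (X -` (S \<inter> {0<..}) \<inter> space M)"
proof -
  have null: "{\<omega> \<in> space M. X \<omega> \<le> 0} \<in> null_sets M"
    using assms(1,2) by (auto simp: null_sets_def emeasure_eq_measure measurable_sets)
  have "X -` S \<inter> space M - {\<omega> \<in> space M. X \<omega> \<le> 0} = X -` (S \<inter> {0<..}) \<inter> space M"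
    by auto
  then show ?thesis
    using measure_Diff_null_set[OF _ null, of "X -` S \<inter> space M"] assms(1,3)
    by (simp add: measurable_sets)
qed

end

lemma binomial_ratio:
  fixes a b u S :: real
  assumes "0 < u" "S \<noteq> 0" "a + b = u"
  shows "real (n choose l) * (a ^ l * b ^ (n - l)) * S / (u ^ n * S) =
         real (n choose l) * (a / u) ^ l * (1 - a / u) ^ (n - l)"
proof (cases "l \<le> n")
  case True
  have "u ^ n = u ^ l * u ^ (n - l)"
    using True by (simp flip: power_add)
  moreover have "1 - a / u = b / u"
    using assms by (simp add: field_simps)
  ultimately show ?thesis
    using assms by (simp add: power_divide)
next
  case False
  then show ?thesis by (simp add: binomial_eq_0)
qed

locale hilt_model = prob_space M
  for M :: "'a measure" and \<Theta> :: "nat \<Rightarrow> 'a \<Rightarrow> real" and F :: "real \<Rightarrow> real"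
    and N :: nat and \<gamma> :: real and A0 :: "nat set" +
  assumes rv: "\<And>i. i < N \<Longrightarrow> \<Theta> i \<in> borel_measurable M"
    and indep: "indep_vars (\<lambda>_. borel) \<Theta> {..<N}"
    and cdf: "\<And>i x. i < N \<Longrightarrow> prob {\<omega> \<in> space M. \<Theta> i \<omega> \<le> x} = F x"
    and F_0: "F 0 = 0"
    and A0_nodes: "A0 \<subseteq> {..<N}"
    and N_pos: "0 < N"
    and \<gamma>_nonneg: "0 \<le> \<gamma>"
begin

definition thr_prob :: "nat \<Rightarrow> real set \<Rightarrow> real" where
  "thr_prob i S = prob (\<Theta> i -` S \<inter> space M)"

definition trajectories :: "nat \<Rightarrow> (nat \<Rightarrow> nat set) set" where
  "trajectories k = {X \<in> {..k} \<rightarrow>\<^sub>E Pow {..<N}. X 0 = A0 \<and> (\<forall>r<k. X r \<subseteq> X (Suc r))}"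

definition traj_event :: "(nat \<Rightarrow> nat set) \<Rightarrow> nat \<Rightarrow> 'a set" where
  "traj_event X k = {\<omega> \<in> space M. \<forall>r\<le>k. hilt_A N \<gamma> (\<lambda>i. \<Theta> i \<omega>) A0 r = X r}"

lemma trajectoriesD:
  assumes "X \<in> trajectories k"
  shows "X 0 = A0" "\<forall>r<k. X r \<subseteq> X (Suc r)" "\<forall>r\<le>k. X r \<subseteq> {..<N}" "finite (X k)"
  using assms finite_subset[of "X k" "{..<N}"] by (auto simp: trajectories_def PiE_iff)

lemma finite_trajectories: "finite (trajectories k)"
  by (rule finite_subset[of _ "{..k} \<rightarrow>\<^sub>E Pow {..<N}"]) (auto simp: trajectories_def finite_PiE)

lemma traj_event_as_thresholds:
  assumes "X \<in> trajectories k"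
  shows "traj_event X k = (\<Inter>i\<in>{..<N}. \<Theta> i -` consistent \<gamma> X k i \<inter> space M)"
  using hilt_A_eq_trajectory_iff[OF trajectoriesD(1-3)[OF assms]] N_pos
  by (auto simp: traj_event_def)

lemma traj_event_sets: "X \<in> trajectories k \<Longrightarrow> traj_event X k \<in> events"
  unfolding traj_event_as_thresholds using N_pos rv consistent_borel
  by (intro sets.finite_INT) (auto intro: measurable_sets)

lemma prob_traj_event:
  "X \<in> trajectories k \<Longrightarrow> prob (traj_event X k) = (\<Prod>i<N. thr_prob i (consistent \<gamma> X k i))"
  unfolding traj_event_as_thresholds thr_prob_def using N_pos
  by (intro indep_varsD[OF indep]) (auto simp: consistent_borel)

text \<open>Distinct trajectories give disjoint events, so probabilities of unions add up.\<close>
lemma prob_traj_union: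
  assumes "C \<subseteq> trajectories k"
  shows "prob (\<Union>X\<in>C. traj_event X k) = (\<Sum>X\<in>C. prob (traj_event X k))"
proof (rule finite_measure_finite_Union)
  show "finite C" using assms finite_trajectories finite_subset by blast
  show "(\<lambda>X. traj_event X k) ` C \<subseteq> events" using assms traj_event_sets by blast
  show "disjoint_family_on (\<lambda>X. traj_event X k) C"
    unfolding disjoint_family_on_def
  proof (intro ballI impI)
    fix X Y assume XY: "X \<in> C" "Y \<in> C" "X \<noteq> Y"
    then have "X \<in> {..k} \<rightarrow>\<^sub>E Pow {..<N}" "Y \<in> {..k} \<rightarrow>\<^sub>E Pow {..<N}"
      using assms unfolding trajectories_def by blast+
    then obtain r where "r \<le> k" "X r \<noteq> Y r"
      using PiE_ext XY(3) by (metis atMost_iff)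
    then show "traj_event X k \<inter> traj_event Y k = {}"
      by (auto simp: traj_event_def)
  qed
qed

text \<open>Thanks to \<open>F 0 = 0\<close>, a node that stays inactive through step \<open>k\<close> of the
  trajectory \<open>X\<close> is, as far as its threshold law is concerned, just a node whose threshold
  exceeds \<open>\<gamma> B(k)\<close>.\<close>
lemma thr_prob_inactive:
  assumes "i < N" "X \<in> trajectories k" "i \<notin> X k" "T \<in> sets borel"
  shows "thr_prob i (consistent \<gamma> X k i \<inter> T) = thr_prob i ({\<gamma> * real (traj_B X k)<..} \<inter> T)"
proof -
  let ?c = "\<gamma> * real (traj_B X k)"
  have null: "prob {\<omega> \<in> space M. \<Theta> i \<omega> \<le> 0} = 0"
    using cdf[OF \<open>i < N\<close>] F_0 by simp
  have "consistent \<gamma> X k i \<inter> T \<inter> {0<..} = {?c<..} \<inter> T"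
    using consistent_inactive[OF trajectoriesD(2,4)[OF assms(2)] assms(3) \<gamma>_nonneg] by auto
  moreover have "0 \<le> ?c"
    using \<gamma>_nonneg by simp
  then have "{?c<..} \<inter> T \<inter> {0<..} = {?c<..} \<inter> T"
    by auto
  ultimately show ?thesis
    unfolding thr_prob_def using cdf_positive[OF rv[OF \<open>i < N\<close>] null] assms(4) consistent_borel
    by (metis sets.Int)
qed

lemma card_inactive_nodes:
  "X \<in> trajectories k \<Longrightarrow> card ({..<N} - X k) = N - (traj_B X k + traj_D X k)"
  using trajectoriesD[of X k] card_traj_last[of k X] by (simp add: card_Diff_subset)

definition active_weight :: "nat \<Rightarrow> (nat \<Rightarrow> nat set) \<Rightarrow> real" where
  "active_weight k X = (\<Prod>i\<in>X k. thr_prob i (consistent \<gamma> X k i))"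

text \<open>The probability of a trajectory compatible with a history ending in \<open>(j, m)\<close>: all of
  its \<open>N - j - m\<close> inactive nodes have thresholds above \<open>\<gamma> j\<close>.\<close>
lemma prob_traj_event_factor:
  assumes X: "X \<in> trajectories k" and j: "traj_B X k = j" and m: "traj_D X k = m"
  shows "prob (traj_event X k) = active_weight k X * (1 - F (\<gamma> * real j)) ^ (N - (j + m))"
proof -
  have inactive: "thr_prob i (consistent \<gamma> X k i) = 1 - F (\<gamma> * real j)"
    if "i \<in> {..<N} - X k" for i
    using thr_prob_inactive[OF _ X, of i UNIV] that cdf_greater[OF rv cdf] j
    by (simp add: thr_prob_def)
  have "(\<Prod>i<N. thr_prob i (consistent \<gamma> X k i)) =
        (\<Prod>i\<in>{..<N} - X k. thr_prob i (consistent \<gamma> X k i)) * active_weight k X"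
    unfolding active_weight_def using trajectoriesD(3)[OF X] by (intro prod.subset_diff) auto
  also have "\<dots> = (1 - F (\<gamma> * real j)) ^ (N - (j + m)) * active_weight k X"
    using inactive card_inactive_nodes[OF X] j m by simp
  finally show ?thesis using prob_traj_event[OF X] by simp
qed

definition extend :: "nat \<Rightarrow> (nat \<Rightarrow> nat set) \<Rightarrow> nat set \<Rightarrow> nat \<Rightarrow> nat set" where
  "extend k X L = X(Suc k := X k \<union> L)"

lemma extend_trajectories:
  "X \<in> trajectories k \<Longrightarrow> L \<subseteq> {..<N} \<Longrightarrow> extend k X L \<in> trajectories (Suc k)"
  by (auto simp: trajectories_def extend_def PiE_iff extensional_def less_Suc_eq le_Suc_eq)

text \<open>The probability of extending such a trajectory by a set \<open>L\<close> of \<open>l\<close> new nodes: these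
  have thresholds in \<open>(\<gamma> j, \<gamma> (j + m)]\<close>, the other inactive nodes above \<open>\<gamma> (j + m)\<close>.\<close>
lemma prob_traj_event_extend:
  assumes X: "X \<in> trajectories k" and j: "traj_B X k = j" and m: "traj_D X k = m"
    and L: "L \<subseteq> {..<N} - X k" "card L = l"
  shows "prob (traj_event (extend k X L) (Suc k)) = active_weight k X *
           ((F (\<gamma> * real (j + m)) - F (\<gamma> * real j)) ^ l * (1 - F (\<gamma> * real (j + m))) ^ (N - (j + m) - l))"
proof -
  let ?c = "\<gamma> * real j" and ?d = "\<gamma> * real (j + m)"
  let ?P = "\<lambda>i. thr_prob i (consistent \<gamma> (extend k X L) (Suc k) i)"
  have cd: "?c \<le> ?d"
    using \<gamma>_nonneg by (simp add: mult_left_mono)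
  have card_Xk: "card (X k) = j + m"
    using card_traj_last[OF trajectoriesD(2,4)[OF X]] j m by simp
  have new: "?P i = F ?d - F ?c" if "i \<in> L" for i
  proof -
    have "?P i = thr_prob i (consistent \<gamma> X k i \<inter> {..?d})"
      using that L card_Xk by (auto simp: extend_def consistent_extend atMost_def)
    also have "\<dots> = thr_prob i {?c<..?d}"
      using thr_prob_inactive[OF _ X, of i "{..?d}"] that L j by (auto simp: greaterThanAtMost_def)
    finally show ?thesis
      using cdf_between[OF rv cdf cd] that L by (auto simp: thr_prob_def)
  qed
  have idle: "?P i = 1 - F ?d" if "i \<in> {..<N} - X k - L" for i
  proof -
    have "?P i = thr_prob i (consistent \<gamma> X k i \<inter> {?d<..})"
      using that card_Xk by (auto simp: extend_def consistent_extend greaterThan_def not_le)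
    also have "\<dots> = thr_prob i {?d<..}"
      using thr_prob_inactive[OF _ X, of i "{?d<..}"] that j cd by (auto simp: Int_absorb1)
    finally show ?thesis
      using cdf_greater[OF rv cdf] that by (auto simp: thr_prob_def)
  qed
  have active: "?P i = thr_prob i (consistent \<gamma> X k i)" if "i \<in> X k" for i
    using that by (simp add: extend_def consistent_extend)
  have "(\<Prod>i<N. ?P i) = (\<Prod>i\<in>{..<N} - X k. ?P i) * (\<Prod>i\<in>X k. ?P i)"
    using trajectoriesD(3)[OF X] by (intro prod.subset_diff) auto
  also have "(\<Prod>i\<in>{..<N} - X k. ?P i) = (\<Prod>i\<in>{..<N} - X k - L. ?P i) * (\<Prod>i\<in>L. ?P i)"
    using L by (intro prod.subset_diff) auto
  also have "\<dots> = (1 - F ?d) ^ (N - (j + m) - l) * (F ?d - F ?c) ^ l"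
    using idle new L card_inactive_nodes[OF X] j m by (simp add: card_Diff_subset finite_subset)
  also have "(\<Prod>i\<in>X k. ?P i) = active_weight k X"
    unfolding active_weight_def using active by simp
  finally show ?thesis
    using prob_traj_event[OF extend_trajectories[OF X, of L]] L by (auto simp: mult_ac)
qed

definition hist_trajectories :: "nat \<Rightarrow> (nat \<Rightarrow> nat \<times> nat) \<Rightarrow> (nat \<Rightarrow> nat set) set" where
  "hist_trajectories k hist = {X \<in> trajectories k. \<forall>r\<le>k. (traj_B X r, traj_D X r) = hist r}"

definition hist_event :: "nat \<Rightarrow> (nat \<Rightarrow> nat \<times> nat) \<Rightarrow> 'a set" where
  "hist_event k hist = {\<omega> \<in> space M. \<forall>r\<le>k.
     (hilt_B N \<gamma> (\<lambda>i. \<Theta> i \<omega>) A0 r, hilt_D N \<gamma> (\<lambda>i. \<Theta> i \<omega>) A0 r) = hist r}"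

definition trajectory_of :: "'a \<Rightarrow> nat \<Rightarrow> nat \<Rightarrow> nat set" where
  "trajectory_of \<omega> k = restrict (hilt_A N \<gamma> (\<lambda>i. \<Theta> i \<omega>) A0) {..k}"

lemma trajectory_of_trajectories: "trajectory_of \<omega> k \<in> trajectories k"
  using hilt_A_subset[OF A0_nodes] hilt_A_Suc_mono
  by (auto simp: trajectories_def trajectory_of_def simp del: hilt_A.simps(2))

lemma traj_event_trajectory_of: "\<omega> \<in> space M \<Longrightarrow> \<omega> \<in> traj_event (trajectory_of \<omega> k) k"
  by (simp add: traj_event_def trajectory_of_def)

lemma trajectory_of_hist:
  assumes "\<omega> \<in> hist_event k hist"
  shows "trajectory_of \<omega> k \<in> hist_trajectories k hist"
proof -
  have "\<forall>r\<le>k. hilt_A N \<gamma> (\<lambda>i. \<Theta> i \<omega>) A0 r = trajectory_of \<omega> k r"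
    by (simp add: trajectory_of_def)
  then show ?thesis
    using assms hilt_BD_eq_traj[of k N \<gamma> "\<lambda>i. \<Theta> i \<omega>" A0 "trajectory_of \<omega> k"]
      trajectory_of_trajectories
    by (auto simp: hist_trajectories_def hist_event_def)
qed

lemma traj_event_hist:
  assumes "X \<in> hist_trajectories k hist"
  shows "traj_event X k \<subseteq> hist_event k hist"
proof
  fix \<omega> assume "\<omega> \<in> traj_event X k"
  then show "\<omega> \<in> hist_event k hist"
    using assms hilt_BD_eq_traj[of k N \<gamma> "\<lambda>i. \<Theta> i \<omega>" A0 X]
    by (auto simp: hist_trajectories_def hist_event_def traj_event_def)
qed

lemma hist_event_eq: "hist_event k hist = (\<Union>X\<in>hist_trajectories k hist. traj_event X k)"
proof
  show "hist_event k hist \<subseteq> (\<Union>X\<in>hist_trajectories k hist. traj_event X k)"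
  proof
    fix \<omega> assume \<omega>: "\<omega> \<in> hist_event k hist"
    then have "\<omega> \<in> traj_event (trajectory_of \<omega> k) k"
      by (intro traj_event_trajectory_of) (simp add: hist_event_def)
    with trajectory_of_hist[OF \<omega>] show "\<omega> \<in> (\<Union>X\<in>hist_trajectories k hist. traj_event X k)"
      by blast
  qed
  show "(\<Union>X\<in>hist_trajectories k hist. traj_event X k) \<subseteq> hist_event k hist"
    using traj_event_hist by blast
qed

definition new_sets :: "nat \<Rightarrow> (nat \<Rightarrow> nat set) \<Rightarrow> nat \<Rightarrow> nat set set" where
  "new_sets k X l = {L. L \<subseteq> {..<N} - X k \<and> card L = l}"

lemma finite_new_sets: "finite (new_sets k X l)"
  by (rule finite_subset[of _ "Pow {..<N}"]) (auto simp: new_sets_def)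

lemma card_new_sets:
  "X \<in> trajectories k \<Longrightarrow> card (new_sets k X l) = (N - (traj_B X k + traj_D X k)) choose l"
  using n_subsets[of "{..<N} - X k" l] card_inactive_nodes by (simp add: new_sets_def)

lemma inj_on_extend: "inj_on (\<lambda>(X, L). extend k X L) (SIGMA X:trajectories k. new_sets k X l)"
proof (rule inj_onI, clarsimp)
  fix X L Y L'
  assume XY: "X \<in> trajectories k" "Y \<in> trajectories k" and "L \<in> new_sets k X l" "L' \<in> new_sets k Y l"
    and eq: "extend k X L = extend k Y L'"
  have "X r = Y r" if "r \<le> k" for r
  proof -
    have "extend k X L r = extend k Y L' r"
      using eq by simp
    then show ?thesis
      using that by (simp add: extend_def)
  qed
  then have "X = Y"
    using XY PiE_ext[of X "{..k}" "\<lambda>_. Pow {..<N}" Y] by (simp add: trajectories_def)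
  moreover have "X k \<union> L = Y k \<union> L'"
    using fun_cong[OF eq, of "Suc k"] by (simp add: extend_def)
  ultimately show "X = Y \<and> L = L'"
    using \<open>L \<in> new_sets k X l\<close> \<open>L' \<in> new_sets k Y l\<close> by (auto simp: new_sets_def)
qed

lemma traj_event_extend_prefix: "traj_event (extend k X L) (Suc k) \<subseteq> traj_event X k"
  by (auto simp: traj_event_def extend_def)

lemma next_event_eq:
  "{\<omega> \<in> hist_event k hist. hilt_D N \<gamma> (\<lambda>i. \<Theta> i \<omega>) A0 (Suc k) = l} =
   (\<Union>Y\<in>(\<lambda>(X, L). extend k X L) ` (SIGMA X:hist_trajectories k hist. new_sets k X l).
      traj_event Y (Suc k))" (is "?E = ?U")
proof
  show "?E \<subseteq> ?U"
  proof
    fix \<omega> assume \<omega>: "\<omega> \<in> ?E"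
    let ?A = "hilt_A N \<gamma> (\<lambda>i. \<Theta> i \<omega>) A0"
    let ?X = "trajectory_of \<omega> k" and ?L = "?A (Suc k) - ?A k"
    have X: "?X \<in> hist_trajectories k hist"
      using \<omega> trajectory_of_hist by blast
    have "?A (Suc k) \<subseteq> {..<N}"
      using hilt_A_subset[OF A0_nodes] by blast
    then have "?L \<in> new_sets k ?X l"
      using \<omega> by (auto simp: new_sets_def trajectory_of_def hilt_D_def simp del: hilt_A.simps(2))
    moreover have "\<omega> \<in> traj_event (extend k ?X ?L) (Suc k)"
    proof -
      have "?A (Suc k) = ?A k \<union> ?L"
        using hilt_A_Suc_mono by blast
      then show ?thesis
        using \<omega> by (auto simp: traj_event_def extend_def trajectory_of_def hist_event_def le_Suc_eq
            simp del: hilt_A.simps(2))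
    qed
    ultimately show "\<omega> \<in> ?U"
      using X by blast
  qed
  show "?U \<subseteq> ?E"
  proof
    fix \<omega> assume "\<omega> \<in> ?U"
    then obtain X L where X: "X \<in> hist_trajectories k hist" and L: "L \<in> new_sets k X l"
      and \<omega>: "\<omega> \<in> traj_event (extend k X L) (Suc k)"
      by auto
    have "hilt_A N \<gamma> (\<lambda>i. \<Theta> i \<omega>) A0 (Suc k) = X k \<union> L"
      "hilt_A N \<gamma> (\<lambda>i. \<Theta> i \<omega>) A0 k = X k"
      using \<omega> unfolding traj_event_def extend_def by (auto simp del: hilt_A.simps(2))
    moreover have "X k \<union> L - X k = L"
      using L by (auto simp: new_sets_def)
    ultimately have "hilt_D N \<gamma> (\<lambda>i. \<Theta> i \<omega>) A0 (Suc k) = card L"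
      by (simp add: hilt_D_def del: hilt_A.simps(2))
    moreover have "\<omega> \<in> hist_event k hist"
      using \<omega> traj_event_extend_prefix traj_event_hist[OF X] by blast
    ultimately show "\<omega> \<in> ?E"
      using L by (simp add: new_sets_def)
  qed
qed

lemma hist_trajectoriesD:
  assumes "X \<in> hist_trajectories k hist" "hist k = (j, m)"
  shows "X \<in> trajectories k" "traj_B X k = j" "traj_D X k = m"
  using assms by (auto simp: hist_trajectories_def)

lemma prob_hist_event:
  assumes last: "hist k = (j, m)"
  shows "prob (hist_event k hist) =
           (1 - F (\<gamma> * real j)) ^ (N - (j + m)) * (\<Sum>X\<in>hist_trajectories k hist. active_weight k X)"
proof -
  let ?C = "hist_trajectories k hist"
  have "?C \<subseteq> trajectories k"
    by (auto simp: hist_trajectories_def)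
  then have "prob (hist_event k hist) = (\<Sum>X\<in>?C. prob (traj_event X k))"
    unfolding hist_event_eq by (rule prob_traj_union)
  also have "\<dots> = (\<Sum>X\<in>?C. (1 - F (\<gamma> * real j)) ^ (N - (j + m)) * active_weight k X)"
    using hist_trajectoriesD[where k=k and hist=hist, OF _ last] prob_traj_event_factor by (simp add: mult.commute)
  finally show ?thesis
    by (simp add: sum_distrib_left)
qed

lemma prob_next_event:
  assumes last: "hist k = (j, m)"
  shows "prob {\<omega> \<in> hist_event k hist. hilt_D N \<gamma> (\<lambda>i. \<Theta> i \<omega>) A0 (Suc k) = l} =
           real ((N - (j + m)) choose l) *
           ((F (\<gamma> * real (j + m)) - F (\<gamma> * real j)) ^ l * (1 - F (\<gamma> * real (j + m))) ^ (N - (j + m) - l)) *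
           (\<Sum>X\<in>hist_trajectories k hist. active_weight k X)"
    (is "_ = real ?c * ?q * _")
proof -
  let ?C = "hist_trajectories k hist"
  let ?ext = "\<lambda>(X, L). extend k X L" and ?I = "SIGMA X:?C. new_sets k X l"
  have C: "?C \<subseteq> trajectories k"
    by (auto simp: hist_trajectories_def)
  have inj: "inj_on ?ext ?I"
    using C by (intro inj_on_subset[OF inj_on_extend]) auto
  have "?ext ` ?I \<subseteq> trajectories (Suc k)"
    using C by (auto simp: new_sets_def intro!: extend_trajectories)
  then have "prob {\<omega> \<in> hist_event k hist. hilt_D N \<gamma> (\<lambda>i. \<Theta> i \<omega>) A0 (Suc k) = l} =
             (\<Sum>Y\<in>?ext ` ?I. prob (traj_event Y (Suc k)))"
    unfolding next_event_eq by (rule prob_traj_union)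
  also have "\<dots> = (\<Sum>(X, L)\<in>?I. prob (traj_event (extend k X L) (Suc k)))"
    unfolding sum.reindex[OF inj] by (simp add: comp_def case_prod_unfold)
  also have "\<dots> = (\<Sum>X\<in>?C. \<Sum>L\<in>new_sets k X l. prob (traj_event (extend k X L) (Suc k)))"
    using finite_subset[OF C finite_trajectories] by (rule sum.Sigma[symmetric]) (simp add: finite_new_sets)
  also have "\<dots> = (\<Sum>X\<in>?C. real ?c * ?q * active_weight k X)"
  proof (rule sum.cong[OF refl])
    fix X assume X: "X \<in> ?C"
    have "prob (traj_event (extend k X L) (Suc k)) = active_weight k X * ?q"
      if "L \<in> new_sets k X l" for L
      using that prob_traj_event_extend[OF hist_trajectoriesD[OF X last]] by (simp add: new_sets_def)
    moreover have "card (new_sets k X l) = ?c"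
      using card_new_sets hist_trajectoriesD[OF X last] by simp
    ultimately show "(\<Sum>L\<in>new_sets k X l. prob (traj_event (extend k X L) (Suc k))) =
        real ?c * ?q * active_weight k X"
      by (simp add: mult_ac)
  qed
  finally show ?thesis
    by (simp add: sum_distrib_left)
qed

text \<open>The core of the theorem: conditioned on a history ending in \<open>(B, D) = (j, m)\<close>, the number
  of new activations is binomial, since the common sum of trajectory weights cancels.\<close>
lemma transition_probability:
  assumes pos: "prob (hist_event k hist) > 0" and last: "hist k = (j, m)" and F_j: "F (\<gamma> * real j) < 1"
  shows "prob {\<omega> \<in> hist_event k hist. hilt_D N \<gamma> (\<lambda>i. \<Theta> i \<omega>) A0 (Suc k) = l} /
           prob (hist_event k hist) =
         real ((N - j - m) choose l) *
         ((F (\<gamma> * real (j + m)) - F (\<gamma> * real j)) / (1 - F (\<gamma> * real j))) ^ l *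
         (1 - (F (\<gamma> * real (j + m)) - F (\<gamma> * real j)) / (1 - F (\<gamma> * real j))) ^ (N - j - m - l)"
proof -
  let ?S = "\<Sum>X\<in>hist_trajectories k hist. active_weight k X"
  have u: "0 < 1 - F (\<gamma> * real j)"
    using F_j by simp
  have "?S \<noteq> 0"
    using pos unfolding prob_hist_event[where k=k and hist=hist, OF last] by (metis mult_zero_right less_irrefl)
  then show ?thesis
    unfolding prob_hist_event[where k=k and hist=hist, OF last] prob_next_event[where k=k and hist=hist, OF last] diff_diff_left[of N j m]
    by (rule binomial_ratio[OF u]) simp
qed

end

theorem mainTheorem8:
  fixes M :: "'a measure" and \<Theta> :: "nat \<Rightarrow> 'a \<Rightarrow> real" and F :: "real \<Rightarrow> real"
    and N :: nat and \<Gamma> :: real and A0 :: "nat set"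
  assumes "prob_space M"
    and "N \<ge> 2"
    and "0 < \<Gamma>" and "\<Gamma> \<le> 1"
    and rv: "\<And>i. i < N \<Longrightarrow> \<Theta> i \<in> borel_measurable M"
    and indep: "prob_space.indep_vars M (\<lambda>_. borel) \<Theta> {..<N}"
    and cdf: "\<And>i x. i < N \<Longrightarrow> measure M {\<omega> \<in> space M. \<Theta> i \<omega> \<le> x} = F x"
    and "continuous_on UNIV F"
    and "F 0 = 0"
    and "A0 \<subseteq> {..<N}" and "A0 \<noteq> {}"
  shows "(\<forall>\<omega> k. hilt_B N (\<Gamma> / (real N - 1)) (\<lambda>i. \<Theta> i \<omega>) A0 (Suc k)
                = hilt_B N (\<Gamma> / (real N - 1)) (\<lambda>i. \<Theta> i \<omega>) A0 k
                  + hilt_D N (\<Gamma> / (real N - 1)) (\<lambda>i. \<Theta> i \<omega>) A0 k)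
       \<and> (\<forall>k (hist :: nat \<Rightarrow> nat \<times> nat) j m l.
           let \<gamma> = \<Gamma> / (real N - 1);
               H = {\<omega> \<in> space M. \<forall>i\<le>k.
                      (hilt_B N \<gamma> (\<lambda>i. \<Theta> i \<omega>) A0 i, hilt_D N \<gamma> (\<lambda>i. \<Theta> i \<omega>) A0 i) = hist i};
               p = (F (\<gamma> * real (j + m)) - F (\<gamma> * real j)) / (1 - F (\<gamma> * real j))
           in (measure M H > 0 \<and> hist k = (j, m) \<and> F (\<gamma> * real j) < 1) \<longrightarrow>
              measure M {\<omega> \<in> H. hilt_D N \<gamma> (\<lambda>i. \<Theta> i \<omega>) A0 (Suc k) = l} / measure M H
                = real ((N - j - m) choose l) * p ^ l * (1 - p) ^ (N - j - m - l))"
proof -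
  define \<gamma> where "\<gamma> = \<Gamma> / (real N - 1)"
  have "finite A0"
    using \<open>A0 \<subseteq> {..<N}\<close> finite_subset by blast
  interpret hilt_model M \<Theta> F N \<gamma> A0
    using assms by (intro hilt_model.intro hilt_model_axioms.intro) (auto simp: \<gamma>_def)
  show ?thesis
    unfolding Let_def \<gamma>_def[symmetric]
    using hilt_B_Suc[OF \<open>finite A0\<close>] transition_probability[unfolded hist_event_def]
    by auto
qed

end
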